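(* Let $H\in\mathbb R^{T\times d_L}$, $X\in\mathbb R^{|V|\times d_R}$, $P\in\mathbb R^{n_P}$ (Frobenius/Euclidean inner products), let $\tau_{R\to L},\tau_{L\to R}\ge0$ be arbitrary finite delays, and consider the closed principal system \[ \dot H(t)=A_L(H(t))+\mathcal K X(t-\tau_{R\to L}),\quad \dot X(t)=A_R(X(t))+\mathcal K^* H(t-\tau_{L\to R}),\quad \dot P(t)=A_P(P(t)), \] where $\mathcal K:\mathbb R^{|V|\times d_R}\to\mathbb R^{T\times d_L}$ is a fixed linear operator with adjoint $\mathcal K^*$ and $\|\mathcal K\|_{\mathrm{op}}\le\|\mathcal K\|_{\mathrm{HS}}\le C_{\mathcal K}$, and $A_L,A_R,A_P$ are Lipschitz maps (the instantaneous principal vector fields, e.g. $A_L(H)=-\Delta_{G_L}(Q_L)H+F_L(H)$ and $A_R(X)=-\Delta_{G_R}(W_R)X+F_R(X)$ with all auxiliary variables frozen) which are one-sided dissipative: \[ \langle A_L(u)-A_L(v),u-v\rangle\le-\mu_L\|u-v\|^2,\ \langle A_R(u)-A_R(v),u-v\rangle\le-\mu_R\|u-v\|^2,\ \langle A_P(u)-A_P(v),u-v\rangle\le-\mu_P\|u-v\|^2 \] with $\mu_L,\mu_R,\mu_P>0$. Assume the system evolves in a compact positively invariant set (of the form of a product of closed balls) and has an equilibrium $(H^*,X^*,P^* )$ there, and assume the small-gain condition $C_{\mathcal K}^2<\mu_L\mu_R$. Then the equilibrium $(H^*,X^*,P^* )$ is unique and globally asymptotically stable, for all finite delays. Moreover,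 with $\tilde\varphi=(\tilde\varphi_L,\tilde\varphi_R,\tilde\varphi_P)$ denoting a history centered at the equilibrium, the Lyapunov–Krasovskii functional \[ V(\tilde\varphi)=\tfrac12\|\tilde\varphi_L(0)\|^2+\tfrac12\|\tilde\varphi_R(0)\|^2+\tfrac12\|\tilde\varphi_P(0)\|^2+\tfrac{C_{\mathcal K}^2}{2\mu_L}\int_{-\tau_{R\to L}}^0\|\tilde\varphi_R(s)\|^2ds+\tfrac{C_{\mathcal K}^2}{2\mu_R}\int_{-\tau_{L\to R}}^0\|\tilde\varphi_L(s)\|^2ds \] satisfies along solutions \[ \dot V\le-\alpha_L\|\tilde H(t)\|^2-\alpha_R\|\tilde X(t)\|^2-\mu_P\|\tilde P(t)\|^2, \] where $\tilde H=H-H^*$, $\tilde X=X-X^*$, $\tilde P=P-P^*$, $\alpha_L=\mu_L/2-C_{\mathcal K}^2/(2\mu_R)>0$ and $\alpha_R=\mu_R/2-C_{\mathcal K}^2/(2\mu_L)>0$.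
   Context: $H$ is a symbolic field on a connected finite graph $G_L$ with node set $\{1,\dots,T\}$ and $X$ a geometric field on a connected finite graph $G_R$ with node set $V$; $\Delta_{G_L}(Q_L)$, $\Delta_{G_R}(W_R)$ are weighted graph Laplacians with edge weights frozen at equilibrium values, and $F_L,F_R$ reaction terms. The operator $\mathcal K$ is induced by a kernel $\mathcal K(\ell,i)\in\mathbb R^{d_L\times d_R}$ via $(\mathcal K X)_\ell=\sum_i\mathcal K(\ell,i)x_i$, with $\|\mathcal K\|_{\mathrm{HS}}^2=\sum_{\ell,i}\|\mathcal K(\ell,i)\|_F^2$. Globally asymptotically stable means Lyapunov stable and every solution with admissible initial history converges to the equilibrium as $t\to\infty$. *)

theory Defs
  imports "HOL-Analysis.Analysis"
begin

definition kernel_op ::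
  "('t::finite \<Rightarrow> 'v::finite \<Rightarrow> real^'dR^'dL) \<Rightarrow> real^'dR^'v \<Rightarrow> real^'dL^'t" where
  "kernel_op k X = (\<chi> l. \<Sum>i\<in>UNIV. k l i *v (X $ i))"

text \<open>Hilbert-Schmidt norm: sqrt of sum of squared Frobenius norms of the blocks
  (the norm on real^'dR^'dL is the Frobenius norm).\<close>
definition hs_norm :: "('t::finite \<Rightarrow> 'v::finite \<Rightarrow> real^'dR^'dL) \<Rightarrow> real" where
  "hs_norm k = sqrt (\<Sum>l\<in>UNIV. \<Sum>i\<in>UNIV. (norm (k l i))\<^sup>2)"

text \<open>Solution of the closed principal delay system on [-tau, infinity),
  tau = max of the two delays; the history is the restriction to [-tau,0].\<close>
definition is_solution ::
  "('l::euclidean_space \<Rightarrow> 'l) \<Rightarrow> ('r::euclidean_space \<Rightarrow> 'r) \<Rightarrow> ('p::euclidean_space \<Rightarrow> 'p)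
   \<Rightarrow> ('r \<Rightarrow> 'l) \<Rightarrow> real \<Rightarrow> real
   \<Rightarrow> (real \<Rightarrow> 'l) \<Rightarrow> (real \<Rightarrow> 'r) \<Rightarrow> (real \<Rightarrow> 'p) \<Rightarrow> bool" where
  "is_solution aL aR aP K tauRL tauLR H X P \<longleftrightarrow>
     (let tau = max tauRL tauLR in
       continuous_on {-tau..} H \<and> continuous_on {-tau..} X \<and> continuous_on {-tau..} P \<and>
       (\<forall>t\<ge>0. (H has_vector_derivative (aL (H t) + K (X (t - tauRL)))) (at t within {0..})
             \<and> (X has_vector_derivative (aR (X t) + adjoint K (H (t - tauLR)))) (at t within {0..})
             \<and> (P has_vector_derivative (aP (P t))) (at t within {0..})))"

definition is_equilibrium ::
  "('l::euclidean_space \<Rightarrow> 'l) \<Rightarrow> ('r::euclidean_space \<Rightarrow> 'r) \<Rightarrow> ('p::euclidean_space \<Rightarrow> 'p)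
   \<Rightarrow> ('r \<Rightarrow> 'l) \<Rightarrow> 'l \<Rightarrow> 'r \<Rightarrow> 'p \<Rightarrow> bool" where
  "is_equilibrium aL aR aP K Hs Xs Ps \<longleftrightarrow>
     aL Hs + K Xs = 0 \<and> aR Xs + adjoint K Hs = 0 \<and> aP Ps = 0"

definition history_in ::
  "real \<Rightarrow> ('l \<times> 'r \<times> 'p) set \<Rightarrow> (real \<Rightarrow> 'l) \<Rightarrow> (real \<Rightarrow> 'r) \<Rightarrow> (real \<Rightarrow> 'p) \<Rightarrow> bool" where
  "history_in tau S H X P \<longleftrightarrow> (\<forall>s\<in>{-tau..0}. (H s, X s, P s) \<in> S)"

definition one_sided_dissipative :: "('a::real_inner \<Rightarrow> 'a) \<Rightarrow> real \<Rightarrow> bool" where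
  "one_sided_dissipative A mu \<longleftrightarrow> (\<forall>u v. inner (A u - A v) (u - v) \<le> - mu * (norm (u - v))\<^sup>2)"

definition LKV ::
  "real \<Rightarrow> real \<Rightarrow> real \<Rightarrow> real \<Rightarrow> real \<Rightarrow>
   (real \<Rightarrow> 'l::real_normed_vector) \<Rightarrow> (real \<Rightarrow> 'r::real_normed_vector) \<Rightarrow> (real \<Rightarrow> 'p::real_normed_vector) \<Rightarrow> real" where
  "LKV C muL muR tauRL tauLR phL phR phP =
     (norm (phL 0))\<^sup>2 / 2 + (norm (phR 0))\<^sup>2 / 2 + (norm (phP 0))\<^sup>2 / 2
     + C\<^sup>2 / (2 * muL) * integral {-tauRL..0} (\<lambda>s. (norm (phR s))\<^sup>2)
     + C\<^sup>2 / (2 * muR) * integral {-tauLR..0} (\<lambda>s. (norm (phL s))\<^sup>2)"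

end

theory Submission
  imports Defs
begin

(* Along a solution, one-sided dissipativity and Young's inequality bound the derivative of the
   Lyapunov-Krasovskii functional V by -alphaL |H~|^2 - alphaR |X~|^2 - muP |P~|^2: Young's
   inequality splits each delayed coupling term <H~, K X~(t - tau)> into an instantaneous part,
   absorbed by dissipativity, and a delayed part, cancelled exactly by the derivative of the
   corresponding integral term. The small-gain condition makes alphaL and alphaR positive.
   V dominates half the squared deviation and its initial value is controlled by the history,
   which gives Lyapunov stability. Solutions confined to the compact invariant set have bounded
   velocity, hence are uniformly Lipschitz in time; a late excursion to distance eps would then
   last for a fixed time and lower V by a fixed amount, which is impossible once V is close to
   its infimum. At a second equilibrium the same rate bound reads 0 <= -alphaL |h|^2 - ...,
   which forces it to coincide with (Hs, Xs, Ps). *)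

lemma has_real_derivative_norm_power2:
  fixes h :: "real \<Rightarrow> 'a::real_inner"
  assumes "(h has_vector_derivative v) (at t)"
  shows "((\<lambda>r. (norm (h r))\<^sup>2) has_real_derivative 2 * inner (h t) v) (at t)"
proof -
  have d: "(h has_derivative (\<lambda>x. x *\<^sub>R v)) (at t)"
    using assms by (simp add: has_vector_derivative_def)
  have "((\<lambda>r. inner (h r) (h r)) has_derivative
          (\<lambda>x. inner (h t) (x *\<^sub>R v) + inner (x *\<^sub>R v) (h t))) (at t)"
    by (rule has_derivative_inner[OF d d])
  moreover have "(\<lambda>x. inner (h t) (x *\<^sub>R v) + inner (x *\<^sub>R v) (h t)) = (*) (2 * inner (h t) v)"
    by (auto simp: inner_commute algebra_simps)
  ultimately show ?thesis
    by (simp add: has_field_derivative_def power2_norm_eq_inner)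
qed

lemma young_inequality:
  fixes mu u w :: real
  assumes "mu > 0"
  shows "u * w \<le> mu / 2 * u\<^sup>2 + w\<^sup>2 / (2 * mu)"
proof -
  have "0 \<le> (mu * u - w)\<^sup>2 / (2 * mu)" using assms by simp
  also have "\<dots> = mu / 2 * u\<^sup>2 + w\<^sup>2 / (2 * mu) - u * w"
    using assms by (simp add: field_simps power2_eq_square)
  finally show ?thesis by simp
qed

lemma linear_kernel_op: "linear (kernel_op k)"
  unfolding kernel_op_def
  by (rule linearI) (auto simp: vec_eq_iff matrix_vector_right_distrib sum.distrib
       scaleR_sum_right matrix_vector_mult_scaleR)

lemma onorm_le_imp_nonneg:
  fixes K :: "'a::euclidean_space \<Rightarrow> 'b::real_normed_vector"
  assumes "linear K" "onorm K \<le> C"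
  shows "0 \<le> C"
  using onorm_pos_le[of K] assms linear_conv_bounded_linear by force

lemma onorm_le_imp_norm_le:
  fixes K :: "'a::euclidean_space \<Rightarrow> 'b::real_normed_vector"
  assumes "linear K" "onorm K \<le> C"
  shows "norm (K x) \<le> C * norm x"
  using onorm[of K x] assms linear_conv_bounded_linear
  by (meson mult_right_mono norm_ge_zero order_trans)

lemma onorm_le_imp_inner_le:
  fixes K :: "'a::euclidean_space \<Rightarrow> 'b::euclidean_space"
  assumes "linear K" "onorm K \<le> C"
  shows "inner y (K x) \<le> C * norm y * norm x"
proof -
  have "inner y (K x) \<le> norm y * norm (K x)" by (rule norm_cauchy_schwarz)
  also have "\<dots> \<le> norm y * (C * norm x)"
    by (rule mult_left_mono[OF onorm_le_imp_norm_le[OF assms]]) simp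
  finally show ?thesis by (simp add: mult_ac)
qed

lemma onorm_le_imp_inner_adjoint_le:
  fixes K :: "'a::euclidean_space \<Rightarrow> 'b::euclidean_space"
  assumes "linear K" "onorm K \<le> C"
  shows "inner x (adjoint K y) \<le> C * norm y * norm x"
  using onorm_le_imp_inner_le[OF assms, of y x] adjoint_works[OF assms(1)]
  by (simp add: inner_commute)

lemma onorm_le_imp_norm_adjoint_le:
  fixes K :: "'a::euclidean_space \<Rightarrow> 'b::euclidean_space"
  assumes "linear K" "onorm K \<le> C"
  shows "norm (adjoint K y) \<le> C * norm y"
proof (cases "adjoint K y = 0")
  case True
  then show ?thesis using onorm_le_imp_nonneg[OF assms] by simp
next
  case False
  have "norm (adjoint K y) * norm (adjoint K y) \<le> (C * norm y) * norm (adjoint K y)"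
    using onorm_le_imp_inner_adjoint_le[OF assms, of "adjoint K y" y]
    by (simp add: power2_norm_eq_inner[symmetric] power2_eq_square)
  then show ?thesis using False by simp
qed

lemma lipschitz_on_UNIV_norm_le:
  fixes f :: "'a::real_normed_vector \<Rightarrow> 'b::real_normed_vector"
  assumes "L-lipschitz_on UNIV f" "norm x \<le> B"
  shows "norm (f x) \<le> norm (f 0) + L * B"
proof -
  have "norm (f x) \<le> norm (f 0) + dist (f x) (f 0)"
    by (metis dist_norm norm_triangle_sub)
  also have "dist (f x) (f 0) \<le> L * norm x"
    using lipschitz_onD[OF assms(1), of x 0] by simp
  also have "\<dots> \<le> L * B"
    using assms lipschitz_on_nonneg by (intro mult_left_mono) auto
  finally show ?thesis by simp
qed

lemma lipschitz_on_of_vector_derivative_bound: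
  fixes f :: "real \<Rightarrow> 'a::real_normed_vector"
  assumes "convex S" "0 \<le> B"
    and "\<And>x. x \<in> S \<Longrightarrow> (f has_vector_derivative f' x) (at x within S)"
    and "\<And>x. x \<in> S \<Longrightarrow> norm (f' x) \<le> B"
  shows "B-lipschitz_on S f"
proof (rule bounded_derivative_imp_lipschitz[where f'="\<lambda>x h. h *\<^sub>R f' x"])
  fix x assume "x \<in> S"
  then show "(f has_derivative (\<lambda>h. h *\<^sub>R f' x)) (at x within S)"
    using assms(3) by (simp add: has_vector_derivative_def)
  have "onorm (\<lambda>h::real. h *\<^sub>R f' x) = norm (f' x)"
    using onorm_scaleR_left[OF bounded_linear_ident] by (simp add: onorm_id)
  then show "onorm (\<lambda>h. h *\<^sub>R f' x) \<le> B" using assms(4)[OF \<open>x \<in> S\<close>] by simp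
qed (use assms in auto)

lemma integral_window_eq:
  fixes phi :: "real \<Rightarrow> real"
  assumes cont: "continuous_on {a..} phi" and "0 \<le> d" "a \<le> r - d"
  shows "integral {-d..0} (\<lambda>s. phi (r + s)) = integral {a..r} phi - integral {a..r - d} phi"
proof -
  have "integral {-d..0} (\<lambda>s. phi (r + s)) = integral {r - d..r} phi"
    using integral_shift_cbox[where f=phi and a="r - d" and b=r and c=r] by (simp add: add.commute)
  moreover have "integral {a..r - d} phi + integral {r - d..r} phi = integral {a..r} phi"
    by (rule Henstock_Kurzweil_Integration.integral_combine)
       (use assms in \<open>auto intro!: integrable_continuous_interval continuous_on_subset[OF cont]\<close>)
  ultimately show ?thesis by linarith
qed

lemma has_real_derivative_integral_upper:
  fixes phi :: "real \<Rightarrow> real"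
  assumes cont: "continuous_on {a..} phi" and "a < u"
  shows "((\<lambda>u. integral {a..u} phi) has_real_derivative phi u) (at u)"
proof -
  have "((\<lambda>u. integral {a..u} phi) has_real_derivative phi u) (at u within {a..u + 1})"
    by (rule integral_has_real_derivative) (use assms in \<open>auto intro: continuous_on_subset\<close>)
  moreover have "at u within {a..u + 1} = at u"
    by (rule at_within_interior) (use assms in auto)
  ultimately show ?thesis by simp
qed

lemma has_real_derivative_integral_window:
  fixes phi :: "real \<Rightarrow> real"
  assumes cont: "continuous_on {a..} phi" and d: "0 \<le> d" and t: "a < t - d"
  shows "((\<lambda>r. integral {-d..0} (\<lambda>s. phi (r + s))) has_real_derivative phi t - phi (t - d)) (at t)"
proof -
  let ?G = "\<lambda>u. integral {a..u} phi"
  have "(?G has_real_derivative phi t) (at t)"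
    by (rule has_real_derivative_integral_upper[OF cont]) (use d t in auto)
  moreover have "((\<lambda>r. ?G (r + - d)) has_real_derivative phi (t - d)) (at t)"
    using has_real_derivative_integral_upper[OF cont t] by (subst DERIV_shift[symmetric]) simp
  ultimately have "((\<lambda>r. ?G r - ?G (r + - d)) has_real_derivative phi t - phi (t - d)) (at t)"
    by (rule DERIV_diff)
  then show ?thesis
    by (rule has_field_derivative_transform_within_open[where S="{a + d<..}"])
       (use t integral_window_eq[OF cont d] in auto)
qed

lemma continuous_on_integral_window:
  fixes phi :: "real \<Rightarrow> real"
  assumes cont: "continuous_on {a..} phi" and d: "0 \<le> d" and b: "a \<le> b - d"
  shows "continuous_on {b..c} (\<lambda>r. integral {-d..0} (\<lambda>s. phi (r + s)))"
proof -
  let ?G = "\<lambda>u. integral {a..u} phi"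
  have G: "continuous_on {a..c} ?G"
    by (intro indefinite_integral_continuous_1 integrable_continuous_interval
        continuous_on_subset[OF cont]) auto
  have "continuous_on {b..c} (\<lambda>r. ?G r - ?G (r - d))"
    by (intro continuous_on_diff continuous_on_subset[OF G] continuous_on_compose2[OF G]
        continuous_intros) (use d b in auto)
  then show ?thesis
    by (rule continuous_on_cong[THEN iffD1, rotated 2]) (use integral_window_eq[OF cont d] b in auto)
qed

lemma integral_window_nonneg:
  fixes phi :: "real \<Rightarrow> real"
  assumes cont: "continuous_on {a..} phi" and "0 \<le> d" "a \<le> r - d"
    and nonneg: "\<And>s. 0 \<le> phi s"
  shows "0 \<le> integral {-d..0} (\<lambda>s. phi (r + s))"
proof -
  have "continuous_on {-d..0} (\<lambda>s. phi (r + s))"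
    by (intro continuous_on_compose2[OF cont] continuous_intros) (use assms in auto)
  then show ?thesis by (intro integral_nonneg integrable_continuous_interval nonneg)
qed

lemma integral_window_le:
  fixes phi :: "real \<Rightarrow> real"
  assumes cont: "continuous_on {a..} phi" and "0 \<le> d" "a \<le> r - d"
    and bound: "\<And>s. s \<in> {r - d..r} \<Longrightarrow> phi s \<le> B"
  shows "integral {-d..0} (\<lambda>s. phi (r + s)) \<le> d * B"
proof -
  have "continuous_on {-d..0} (\<lambda>s. phi (r + s))"
    by (intro continuous_on_compose2[OF cont] continuous_intros) (use assms in auto)
  then have "integral {-d..0} (\<lambda>s. phi (r + s)) \<le> integral {-d..0} (\<lambda>s. B)"
    by (intro integral_le integrable_continuous_interval) (use bound in auto)
  then show ?thesis using assms(2) by simp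
qed

lemma deriv_le_neg_imp_decrease:
  fixes V :: "real \<Rightarrow> real"
  assumes "a \<le> b" and cont: "continuous_on {a..b} V"
    and deriv: "\<And>x. a < x \<Longrightarrow> x < b \<Longrightarrow> \<exists>D. (V has_real_derivative D) (at x) \<and> D \<le> - e"
  shows "V b + e * (b - a) \<le> V a"
proof -
  have "V b + e * b \<le> V a + e * a"
  proof (rule DERIV_nonpos_imp_decreasing_open[OF \<open>a \<le> b\<close>, where f="\<lambda>r. V r + e * r"])
    fix x assume "a < x" "x < b"
    then obtain D where "(V has_real_derivative D) (at x)" "D \<le> - e" using deriv by blast
    then show "\<exists>y. ((\<lambda>r. V r + e * r) has_real_derivative y) (at x) \<and> y \<le> 0"
      by (intro exI[of _ "D + e"]) (auto intro!: derivative_eq_intros)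
  qed (intro continuous_intros cont)
  then show ?thesis by (simp add: algebra_simps)
qed

lemma tendsto_of_lipschitz_and_dissipation:
  fixes Z :: "real \<Rightarrow> 'a::real_normed_vector" and V :: "real \<Rightarrow> real"
  assumes lip: "L-lipschitz_on {0..} Z"
    and V_nonneg: "\<And>t. 0 \<le> t \<Longrightarrow> 0 \<le> V t"
    and "0 < c"
    and dissipation: "\<And>t1 t2 e. 0 \<le> t1 \<Longrightarrow> t1 \<le> t2 \<Longrightarrow>
          (\<And>s. s \<in> {t1..t2} \<Longrightarrow> e \<le> (norm (Z s - z))\<^sup>2) \<Longrightarrow> V t2 + c * e * (t2 - t1) \<le> V t1"
  shows "(Z \<longlongrightarrow> z) at_top"
proof (rule tendstoI)
  fix \<epsilon> :: real assume "0 < \<epsilon>"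
  have "0 \<le> L" using lipschitz_on_nonneg[OF lip] .
  define \<delta> where "\<delta> = \<epsilon> / (2 * (L + 1))"
  have "0 < \<delta>" and L\<delta>: "L * \<delta> \<le> \<epsilon> / 2"
    using \<open>0 < \<epsilon>\<close> \<open>0 \<le> L\<close> by (auto simp: \<delta>_def field_simps)
  define \<kappa> where "\<kappa> = c * (\<epsilon> / 2)\<^sup>2 * \<delta>"
  have "0 < \<kappa>" using \<open>0 < c\<close> \<open>0 < \<epsilon>\<close> \<open>0 < \<delta>\<close> by (simp add: \<kappa>_def)
  have antimono: "V t2 \<le> V t1" if "0 \<le> t1" "t1 \<le> t2" for t1 t2
    using dissipation[OF that, of 0] by simp
  have bdd: "bdd_below (V ` {0..})"
    using V_nonneg by (auto intro: bdd_belowI[of _ 0])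
  \<comment> \<open>\<open>V\<close> comes within \<open>\<kappa>\<close> of its infimum; a later excursion of \<open>Z\<close> to distance \<open>\<epsilon>\<close>
    keeps it at distance \<open>\<epsilon>/2\<close> for time \<open>\<delta>\<close>, and \<open>V\<close> would drop by \<open>\<kappa>\<close> below the infimum.\<close>
  obtain t0 where "0 \<le> t0" and t0: "V t0 < Inf (V ` {0..}) + \<kappa>"
    using cInf_lessD[of "V ` {0..}" "Inf (V ` {0..}) + \<kappa>"] \<open>0 < \<kappa>\<close> by auto
  have "dist (Z t) z < \<epsilon>" if "t0 \<le> t" for t
  proof (rule ccontr)
    assume far: "\<not> dist (Z t) z < \<epsilon>"
    have "(\<epsilon> / 2)\<^sup>2 \<le> (norm (Z s - z))\<^sup>2" if s: "s \<in> {t..t + \<delta>}" for s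
    proof -
      have "dist (Z s) (Z t) \<le> L * dist s t"
        using lipschitz_onD[OF lip] s \<open>0 \<le> t0\<close> \<open>t0 \<le> t\<close> by auto
      also have "\<dots> \<le> L * \<delta>" using s \<open>0 \<le> L\<close> by (intro mult_left_mono) (auto simp: dist_real_def)
      finally have "dist (Z s) (Z t) \<le> \<epsilon> / 2" using L\<delta> by linarith
      moreover have "dist (Z t) z \<le> dist (Z s) z + dist (Z s) (Z t)"
        by (metis dist_commute dist_triangle)
      ultimately have "\<epsilon> / 2 \<le> norm (Z s - z)" using far by (simp add: dist_norm)
      then show ?thesis using \<open>0 < \<epsilon>\<close> by (intro power_mono) auto
    qed
    then have "V (t + \<delta>) + \<kappa> \<le> V t"
      using dissipation[of t "t + \<delta>"] \<open>0 \<le> t0\<close> \<open>t0 \<le> t\<close> \<open>0 < \<delta>\<close> by (simp add: \<kappa>_def)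
    moreover have "V t \<le> V t0" using antimono \<open>0 \<le> t0\<close> \<open>t0 \<le> t\<close> by blast
    moreover have "Inf (V ` {0..}) \<le> V (t + \<delta>)"
      by (rule cInf_lower[OF _ bdd]) (use \<open>0 \<le> t0\<close> \<open>t0 \<le> t\<close> \<open>0 < \<delta>\<close> in auto)
    ultimately show False using t0 by linarith
  qed
  then show "\<forall>\<^sub>F t in at_top. dist (Z t) z < \<epsilon>"
    unfolding eventually_at_top_linorder by blast
qed

locale coupled_delay_system =
  fixes aL :: "'l::euclidean_space \<Rightarrow> 'l" and aR :: "'r::euclidean_space \<Rightarrow> 'r"
    and aP :: "'p::euclidean_space \<Rightarrow> 'p" and K :: "'r \<Rightarrow> 'l"
    and tauRL tauLR C muL muR muP :: real and Hs :: 'l and Xs :: 'r and Ps :: 'p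
  assumes linear_K: "linear K" and onorm_K: "onorm K \<le> C"
    and delays_nonneg: "0 \<le> tauRL" "0 \<le> tauLR"
    and mu_pos: "0 < muL" "0 < muR" "0 < muP"
    and dissL: "one_sided_dissipative aL muL"
    and dissR: "one_sided_dissipative aR muR"
    and dissP: "one_sided_dissipative aP muP"
    and equilibrium: "is_equilibrium aL aR aP K Hs Xs Ps"
    and small_gain: "C\<^sup>2 < muL * muR"
begin

definition "alphaL = muL / 2 - C\<^sup>2 / (2 * muR)"
definition "alphaR = muR / 2 - C\<^sup>2 / (2 * muL)"

lemma alphaL_pos: "0 < alphaL"
  and alphaR_pos: "0 < alphaR"
  using small_gain mu_pos by (simp_all add: alphaL_def alphaR_def field_simps)

text \<open>Here \<open>(u, v, w)\<close> is the current state and \<open>(ud, vd)\<close> the delayed one; the left-hand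
  side is the derivative of the Lyapunov-Krasovskii functional along the flow.\<close>

lemma lyapunov_krasovskii_rate_le:
  "inner (u - Hs) (aL u + K vd) + inner (v - Xs) (aR v + adjoint K ud) + inner (w - Ps) (aP w)
     + C\<^sup>2 / (2 * muL) * ((norm (v - Xs))\<^sup>2 - (norm (vd - Xs))\<^sup>2)
     + C\<^sup>2 / (2 * muR) * ((norm (u - Hs))\<^sup>2 - (norm (ud - Hs))\<^sup>2)
   \<le> - alphaL * (norm (u - Hs))\<^sup>2 - alphaR * (norm (v - Xs))\<^sup>2 - muP * (norm (w - Ps))\<^sup>2"
proof -
  have eqL: "aL u + K vd = (aL u - aL Hs) + K (vd - Xs)"
    using equilibrium linear_diff[OF linear_K, of vd Xs]
    by (simp add: is_equilibrium_def algebra_simps eq_neg_iff_add_eq_0[symmetric])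
  have eqR: "aR v + adjoint K ud = (aR v - aR Xs) + adjoint K (ud - Hs)"
    using equilibrium linear_diff[OF adjoint_linear[OF linear_K], of ud Hs]
    by (simp add: is_equilibrium_def algebra_simps eq_neg_iff_add_eq_0[symmetric])
  have sL: "inner (u - Hs) (aL u - aL Hs) \<le> - muL * (norm (u - Hs))\<^sup>2"
    using dissL by (simp add: one_sided_dissipative_def inner_commute)
  have sR: "inner (v - Xs) (aR v - aR Xs) \<le> - muR * (norm (v - Xs))\<^sup>2"
    using dissR by (simp add: one_sided_dissipative_def inner_commute)
  have sP: "inner (w - Ps) (aP w) \<le> - muP * (norm (w - Ps))\<^sup>2"
    using dissP equilibrium unfolding one_sided_dissipative_def is_equilibrium_def
    by (metis diff_zero inner_commute)
  have cL: "inner (u - Hs) (K (vd - Xs))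
      \<le> muL / 2 * (norm (u - Hs))\<^sup>2 + C\<^sup>2 / (2 * muL) * (norm (vd - Xs))\<^sup>2"
  proof -
    have "inner (u - Hs) (K (vd - Xs)) \<le> norm (u - Hs) * (C * norm (vd - Xs))"
      using onorm_le_imp_inner_le[OF linear_K onorm_K] by (simp add: mult_ac)
    also have "\<dots> \<le> muL / 2 * (norm (u - Hs))\<^sup>2 + (C * norm (vd - Xs))\<^sup>2 / (2 * muL)"
      by (rule young_inequality[OF mu_pos(1)])
    finally show ?thesis by (simp add: power_mult_distrib)
  qed
  have cR: "inner (v - Xs) (adjoint K (ud - Hs))
      \<le> muR / 2 * (norm (v - Xs))\<^sup>2 + C\<^sup>2 / (2 * muR) * (norm (ud - Hs))\<^sup>2"
  proof -
    have "inner (v - Xs) (adjoint K (ud - Hs)) \<le> norm (v - Xs) * (C * norm (ud - Hs))"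
      using onorm_le_imp_inner_adjoint_le[OF linear_K onorm_K] by (simp add: mult_ac)
    also have "\<dots> \<le> muR / 2 * (norm (v - Xs))\<^sup>2 + (C * norm (ud - Hs))\<^sup>2 / (2 * muR)"
      by (rule young_inequality[OF mu_pos(2)])
    finally show ?thesis by (simp add: power_mult_distrib)
  qed
  show ?thesis
    unfolding eqL eqR inner_add_right alphaL_def alphaR_def
    using sL sR sP cL cR by (simp add: algebra_simps)
qed

lemma equilibrium_unique:
  assumes "is_equilibrium aL aR aP K H' X' P'"
  shows "(H', X', P') = (Hs, Xs, Ps)"
proof -
  have "0 \<le> - alphaL * (norm (H' - Hs))\<^sup>2 - alphaR * (norm (X' - Xs))\<^sup>2 - muP * (norm (P' - Ps))\<^sup>2"
    using lyapunov_krasovskii_rate_le[of H' X' X' H' P'] assms by (simp add: is_equilibrium_def)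
  moreover have "0 \<le> alphaL * (norm (H' - Hs))\<^sup>2" "0 \<le> alphaR * (norm (X' - Xs))\<^sup>2"
    "0 \<le> muP * (norm (P' - Ps))\<^sup>2"
    using alphaL_pos alphaR_pos mu_pos(3) by simp_all
  ultimately have "alphaL * (norm (H' - Hs))\<^sup>2 = 0 \<and> alphaR * (norm (X' - Xs))\<^sup>2 = 0
      \<and> muP * (norm (P' - Ps))\<^sup>2 = 0"
    by linarith
  then show ?thesis using alphaL_pos alphaR_pos mu_pos(3) by simp
qed

end

locale coupled_delay_solution = coupled_delay_system +
  fixes H :: "real \<Rightarrow> 'l::euclidean_space" and X :: "real \<Rightarrow> 'r::euclidean_space"
    and P :: "real \<Rightarrow> 'p::euclidean_space"
  assumes solution: "is_solution aL aR aP K tauRL tauLR H X P"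
begin

definition "devH t = (norm (H t - Hs))\<^sup>2"
definition "devX t = (norm (X t - Xs))\<^sup>2"
definition "devP t = (norm (P t - Ps))\<^sup>2"
definition "dev t = devH t + devX t + devP t"

definition "V r = LKV C muL muR tauRL tauLR
   (\<lambda>s. H (r + s) - Hs) (\<lambda>s. X (r + s) - Xs) (\<lambda>s. P (r + s) - Ps)"

lemma dev_nonneg: "0 \<le> devH t" "0 \<le> devX t" "0 \<le> devP t"
  by (simp_all add: devH_def devX_def devP_def)

lemma dev_eq_norm_power2: "dev t = (norm ((H t, X t, P t) - (Hs, Xs, Ps)))\<^sup>2"
  by (simp add: dev_def devH_def devX_def devP_def norm_Pair)

lemma V_eq: "V r = dev r / 2
     + C\<^sup>2 / (2 * muL) * integral {-tauRL..0} (\<lambda>s. devX (r + s))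
     + C\<^sup>2 / (2 * muR) * integral {-tauLR..0} (\<lambda>s. devH (r + s))"
  by (simp add: V_def LKV_def dev_def devH_def devX_def devP_def add_divide_distrib)

lemma continuous_on_solution:
  "continuous_on {-max tauRL tauLR..} H" "continuous_on {-max tauRL tauLR..} X"
  "continuous_on {-max tauRL tauLR..} P"
  using solution by (auto simp: is_solution_def Let_def)

lemma continuous_on_devH: "continuous_on {-max tauRL tauLR..} devH"
  and continuous_on_devX: "continuous_on {-max tauRL tauLR..} devX"
  and continuous_on_devP: "continuous_on {-max tauRL tauLR..} devP"
  unfolding devH_def devX_def devP_def by (intro continuous_intros continuous_on_solution)+

lemma solution_has_vector_derivative:
  assumes "0 \<le> t"
  shows "(H has_vector_derivative aL (H t) + K (X (t - tauRL))) (at t within {0..})"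
    "(X has_vector_derivative aR (X t) + adjoint K (H (t - tauLR))) (at t within {0..})"
    "(P has_vector_derivative aP (P t)) (at t within {0..})"
  using solution assms by (auto simp: is_solution_def Let_def)

lemma V_has_derivative_le:
  assumes "0 < t"
  shows "\<exists>D. (V has_real_derivative D) (at t) \<and>
           D \<le> - alphaL * devH t - alphaR * devX t - muP * devP t"
proof -
  have at_t: "at t within {0..} = at t" by (rule at_within_interior) (use assms in simp)
  define vH where "vH = aL (H t) + K (X (t - tauRL))"
  define vX where "vX = aR (X t) + adjoint K (H (t - tauLR))"
  define vP where "vP = aP (P t)"
  have "(devH has_real_derivative 2 * inner (H t - Hs) vH) (at t)"
    unfolding devH_def[abs_def] using solution_has_vector_derivative(1)[of t] assms at_t
    by (intro has_real_derivative_norm_power2 derivative_eq_intros) (auto simp: vH_def)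
  moreover have "(devX has_real_derivative 2 * inner (X t - Xs) vX) (at t)"
    unfolding devX_def[abs_def] using solution_has_vector_derivative(2)[of t] assms at_t
    by (intro has_real_derivative_norm_power2 derivative_eq_intros) (auto simp: vX_def)
  moreover have "(devP has_real_derivative 2 * inner (P t - Ps) vP) (at t)"
    unfolding devP_def[abs_def] using solution_has_vector_derivative(3)[of t] assms at_t
    by (intro has_real_derivative_norm_power2 derivative_eq_intros) (auto simp: vP_def)
  moreover have "((\<lambda>r. integral {-tauRL..0} (\<lambda>s. devX (r + s)))
      has_real_derivative devX t - devX (t - tauRL)) (at t)"
    by (rule has_real_derivative_integral_window[OF continuous_on_devX])
       (use delays_nonneg assms in auto)
  moreover have "((\<lambda>r. integral {-tauLR..0} (\<lambda>s. devH (r + s)))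
      has_real_derivative devH t - devH (t - tauLR)) (at t)"
    by (rule has_real_derivative_integral_window[OF continuous_on_devH])
       (use delays_nonneg assms in auto)
  ultimately have "(V has_real_derivative
        inner (H t - Hs) vH + inner (X t - Xs) vX + inner (P t - Ps) vP
      + C\<^sup>2 / (2 * muL) * (devX t - devX (t - tauRL))
      + C\<^sup>2 / (2 * muR) * (devH t - devH (t - tauLR))) (at t)"
    unfolding V_eq[abs_def] dev_def using mu_pos by (auto intro!: derivative_eq_intros)
  moreover have "inner (H t - Hs) vH + inner (X t - Xs) vX + inner (P t - Ps) vP
      + C\<^sup>2 / (2 * muL) * (devX t - devX (t - tauRL))
      + C\<^sup>2 / (2 * muR) * (devH t - devH (t - tauLR))
      \<le> - alphaL * devH t - alphaR * devX t - muP * devP t"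
    using lyapunov_krasovskii_rate_le[of "H t" "X (t - tauRL)" "X t" "H (t - tauLR)" "P t"]
    by (simp add: vH_def vX_def vP_def devH_def devX_def devP_def)
  ultimately show ?thesis by blast
qed

lemma continuous_on_V: "continuous_on {0..b} V"
proof -
  have "continuous_on {0..b} devH" "continuous_on {0..b} devX" "continuous_on {0..b} devP"
    using continuous_on_devH continuous_on_devX continuous_on_devP delays_nonneg
    by (auto elim!: continuous_on_subset)
  moreover have "continuous_on {0..b} (\<lambda>r. integral {-tauRL..0} (\<lambda>s. devX (r + s)))"
    by (rule continuous_on_integral_window[OF continuous_on_devX]) (use delays_nonneg in auto)
  moreover have "continuous_on {0..b} (\<lambda>r. integral {-tauLR..0} (\<lambda>s. devH (r + s)))"
    by (rule continuous_on_integral_window[OF continuous_on_devH]) (use delays_nonneg in auto)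
  ultimately show ?thesis
    unfolding V_eq[abs_def] dev_def by (intro continuous_intros) auto
qed

lemma half_dev_le_V:
  assumes "0 \<le> r"
  shows "dev r / 2 \<le> V r"
proof -
  have "0 \<le> integral {-tauRL..0} (\<lambda>s. devX (r + s))"
    by (rule integral_window_nonneg[OF continuous_on_devX])
       (use delays_nonneg assms in \<open>auto simp: devX_def\<close>)
  moreover have "0 \<le> integral {-tauLR..0} (\<lambda>s. devH (r + s))"
    by (rule integral_window_nonneg[OF continuous_on_devH])
       (use delays_nonneg assms in \<open>auto simp: devH_def\<close>)
  ultimately show ?thesis
    unfolding V_eq using mu_pos by (simp add: add_increasing2)
qed

definition "decay_rate = min alphaL (min alphaR muP)"

lemma decay_rate_pos: "0 < decay_rate"
  using alphaL_pos alphaR_pos mu_pos by (simp add: decay_rate_def)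

lemma V_decrease:
  assumes "0 \<le> t1" "t1 \<le> t2" and dev_ge: "\<And>s. s \<in> {t1..t2} \<Longrightarrow> e \<le> dev s"
  shows "V t2 + decay_rate * e * (t2 - t1) \<le> V t1"
proof -
  have "V t2 + (decay_rate * e) * (t2 - t1) \<le> V t1"
  proof (rule deriv_le_neg_imp_decrease[OF \<open>t1 \<le> t2\<close>])
    show "continuous_on {t1..t2} V"
      using continuous_on_V[of t2] \<open>0 \<le> t1\<close> by (auto elim: continuous_on_subset)
    fix x assume x: "t1 < x" "x < t2"
    obtain D where D: "(V has_real_derivative D) (at x)"
      and D_le: "D \<le> - alphaL * devH x - alphaR * devX x - muP * devP x"
      using V_has_derivative_le[of x] x \<open>0 \<le> t1\<close> by auto
    have "decay_rate * devH x \<le> alphaL * devH x" "decay_rate * devX x \<le> alphaR * devX x"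
      "decay_rate * devP x \<le> muP * devP x"
      by (auto intro!: mult_right_mono simp: decay_rate_def devH_def devX_def devP_def)
    moreover have "decay_rate * e \<le> decay_rate * dev x"
      using dev_ge[of x] x decay_rate_pos by (intro mult_left_mono) auto
    ultimately have "D \<le> - (decay_rate * e)"
      using D_le by (simp add: dev_def algebra_simps)
    with D show "\<exists>D. (V has_real_derivative D) (at x) \<and> D \<le> - (decay_rate * e)" by blast
  qed
  then show ?thesis by (simp add: mult.assoc)
qed

lemma V_antimono: "0 \<le> t1 \<Longrightarrow> t1 \<le> t2 \<Longrightarrow> V t2 \<le> V t1"
  using V_decrease[of t1 t2 0] by (simp add: dev_def devH_def devX_def devP_def)

lemma dev_bound_of_history:
  assumes history: "\<And>s. s \<in> {-max tauRL tauLR..0} \<Longrightarrow> dev s < \<delta>\<^sup>2" and "0 \<le> t"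
  shows "dev t < (1 + C\<^sup>2 / muL * tauRL + C\<^sup>2 / muR * tauLR) * \<delta>\<^sup>2"
proof -
  have history_le: "devH s \<le> \<delta>\<^sup>2" "devX s \<le> \<delta>\<^sup>2" if "s \<in> {-max tauRL tauLR..0}" for s
    using history[OF that] dev_nonneg[of s] unfolding dev_def by linarith+
  have "integral {-tauRL..0} (\<lambda>s. devX (0 + s)) \<le> tauRL * \<delta>\<^sup>2"
    by (rule integral_window_le[OF continuous_on_devX])
       (use delays_nonneg history_le in auto)
  moreover have "integral {-tauLR..0} (\<lambda>s. devH (0 + s)) \<le> tauLR * \<delta>\<^sup>2"
    by (rule integral_window_le[OF continuous_on_devH])
       (use delays_nonneg history_le in auto)
  ultimately have "V 0 \<le> dev 0 / 2 + C\<^sup>2 / (2 * muL) * (tauRL * \<delta>\<^sup>2)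
      + C\<^sup>2 / (2 * muR) * (tauLR * \<delta>\<^sup>2)"
    unfolding V_eq using mu_pos by (intro add_mono mult_left_mono) auto
  moreover have "dev t / 2 \<le> V t" by (rule half_dev_le_V[OF \<open>0 \<le> t\<close>])
  moreover have "V t \<le> V 0" by (rule V_antimono) (use \<open>0 \<le> t\<close> in auto)
  moreover have "dev 0 < \<delta>\<^sup>2" using history delays_nonneg by simp
  moreover have "(1 + C\<^sup>2 / muL * tauRL + C\<^sup>2 / muR * tauLR) * \<delta>\<^sup>2
      = \<delta>\<^sup>2 + 2 * (C\<^sup>2 / (2 * muL) * (tauRL * \<delta>\<^sup>2)) + 2 * (C\<^sup>2 / (2 * muR) * (tauLR * \<delta>\<^sup>2))"
    by (simp add: algebra_simps)
  ultimately show ?thesis by linarith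
qed

lemma solution_velocity_le:
  assumes lipschitz: "LL-lipschitz_on UNIV aL" "LR-lipschitz_on UNIV aR" "LP-lipschitz_on UNIV aP"
    and bound: "\<And>t. -max tauRL tauLR \<le> t \<Longrightarrow> norm (H t, X t, P t) \<le> B"
    and "0 \<le> t"
  shows "norm (aL (H t) + K (X (t - tauRL)), aR (X t) + adjoint K (H (t - tauLR)), aP (P t))
    \<le> (norm (aL 0) + LL * B + C * B) + (norm (aR 0) + LR * B + C * B) + (norm (aP 0) + LP * B)"
proof -
  have "0 \<le> C" using onorm_le_imp_nonneg[OF linear_K onorm_K] .
  have component_le: "norm (H s) \<le> B" "norm (X s) \<le> B" "norm (P s) \<le> B"
    if "-max tauRL tauLR \<le> s" for s
    using bound[OF that] norm_fst_le[of "H s" "(X s, P s)"] norm_snd_le[of "(X s, P s)" "H s"]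
      norm_fst_le[of "X s" "P s"] norm_snd_le[of "P s" "X s"] by auto
  have "-max tauRL tauLR \<le> t" "-max tauRL tauLR \<le> t - tauRL" "-max tauRL tauLR \<le> t - tauLR"
    using \<open>0 \<le> t\<close> delays_nonneg by auto
  note component_le = component_le[OF this(1)] component_le[OF this(2)] component_le[OF this(3)]
  have "norm (K (X (t - tauRL))) \<le> C * B" "norm (adjoint K (H (t - tauLR))) \<le> C * B"
    using onorm_le_imp_norm_le[OF linear_K onorm_K, of "X (t - tauRL)"]
      onorm_le_imp_norm_adjoint_le[OF linear_K onorm_K, of "H (t - tauLR)"]
      mult_left_mono[OF component_le(5) \<open>0 \<le> C\<close>] mult_left_mono[OF component_le(7) \<open>0 \<le> C\<close>]
    by linarith+
  moreover have "norm (aL (H t)) \<le> norm (aL 0) + LL * B" "norm (aR (X t)) \<le> norm (aR 0) + LR * B"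
    "norm (aP (P t)) \<le> norm (aP 0) + LP * B"
    using lipschitz component_le by (auto intro: lipschitz_on_UNIV_norm_le)
  moreover have "norm (a, b, c) \<le> norm a + norm b + norm c" for a :: 'l and b :: 'r and c :: 'p
    using norm_Pair_le[of a "(b, c)"] norm_Pair_le[of b c] by linarith
  ultimately show ?thesis
    using norm_triangle_ineq[of "aL (H t)" "K (X (t - tauRL))"]
      norm_triangle_ineq[of "aR (X t)" "adjoint K (H (t - tauLR))"]
    by (smt (verit))
qed

lemma lipschitz_on_bounded_solution:
  assumes lipschitz: "LL-lipschitz_on UNIV aL" "LR-lipschitz_on UNIV aR" "LP-lipschitz_on UNIV aP"
    and bound: "\<And>t. -max tauRL tauLR \<le> t \<Longrightarrow> norm (H t, X t, P t) \<le> B"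
  shows "\<exists>L. L-lipschitz_on {0..} (\<lambda>t. (H t, X t, P t))"
proof -
  define vel where "vel t = (aL (H t) + K (X (t - tauRL)),
      aR (X t) + adjoint K (H (t - tauLR)), aP (P t))" for t
  define B' where "B' = (norm (aL 0) + LL * B + C * B) + (norm (aR 0) + LR * B + C * B)
      + (norm (aP 0) + LP * B)"
  have "0 \<le> B'"
    using norm_ge_zero[of "vel 0"] solution_velocity_le[OF lipschitz bound, of 0]
    unfolding vel_def B'_def by linarith
  moreover have "((\<lambda>t. (H t, X t, P t)) has_vector_derivative vel t) (at t within {0..})"
    if "t \<in> {0..}" for t
    using solution_has_vector_derivative[of t] that
    by (auto simp: vel_def intro!: has_vector_derivative_Pair)
  moreover have "norm (vel t) \<le> B'" if "t \<in> {0..}" for t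
    using solution_velocity_le[OF lipschitz bound, of t] that by (simp add: vel_def B'_def)
  ultimately show ?thesis
    by (intro exI lipschitz_on_of_vector_derivative_bound[where f'=vel]) auto
qed

lemma tendsto_equilibrium_if_lipschitz:
  assumes "L-lipschitz_on {0..} (\<lambda>t. (H t, X t, P t))"
  shows "((\<lambda>t. (H t, X t, P t)) \<longlongrightarrow> (Hs, Xs, Ps)) at_top"
proof (rule tendsto_of_lipschitz_and_dissipation[OF assms _ decay_rate_pos, where V=V])
  show "0 \<le> V t" if "0 \<le> t" for t
    using dev_nonneg[of t] by (intro order_trans[OF _ half_dev_le_V[OF that]]) (simp add: dev_def)
  show "V t2 + decay_rate * e * (t2 - t1) \<le> V t1"
    if "0 \<le> t1" "t1 \<le> t2"
      and "\<And>s. s \<in> {t1..t2} \<Longrightarrow> e \<le> (norm ((H s, X s, P s) - (Hs, Xs, Ps)))\<^sup>2"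
    for t1 t2 e
    using V_decrease that by (simp add: dev_eq_norm_power2)
qed

end

context coupled_delay_system
begin

lemma LKV_has_derivative_le:
  assumes "is_solution aL aR aP K tauRL tauLR H X P" "0 < t"
  shows "\<exists>D. ((\<lambda>r. LKV C muL muR tauRL tauLR (\<lambda>s. H (r + s) - Hs) (\<lambda>s. X (r + s) - Xs)
                  (\<lambda>s. P (r + s) - Ps)) has_real_derivative D) (at t)
           \<and> D \<le> - alphaL * (norm (H t - Hs))\<^sup>2 - alphaR * (norm (X t - Xs))\<^sup>2
                  - muP * (norm (P t - Ps))\<^sup>2"
proof -
  interpret coupled_delay_solution aL aR aP K tauRL tauLR C muL muR muP Hs Xs Ps H X P
    using assms(1) by unfold_locales
  show ?thesis
    using V_has_derivative_le[OF assms(2)] by (simp add: V_def[abs_def] devH_def devX_def devP_def)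
qed

lemma lyapunov_stable:
  assumes "0 < \<epsilon>"
  shows "\<exists>\<delta>>0. \<forall>H X P. is_solution aL aR aP K tauRL tauLR H X P
      \<and> (\<forall>s\<in>{-max tauRL tauLR..0}. norm ((H s, X s, P s) - (Hs, Xs, Ps)) < \<delta>)
      \<longrightarrow> (\<forall>t\<ge>0. norm ((H t, X t, P t) - (Hs, Xs, Ps)) < \<epsilon>)"
proof -
  define M where "M = 1 + C\<^sup>2 / muL * tauRL + C\<^sup>2 / muR * tauLR"
  have "1 \<le> M" using mu_pos delays_nonneg by (simp add: M_def)
  define \<delta> where "\<delta> = \<epsilon> / sqrt M"
  have "0 < \<delta>" and M\<delta>: "M * \<delta>\<^sup>2 = \<epsilon>\<^sup>2"
    using \<open>0 < \<epsilon>\<close> \<open>1 \<le> M\<close> by (simp_all add: \<delta>_def power_divide)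
  have "norm ((H t, X t, P t) - (Hs, Xs, Ps)) < \<epsilon>"
    if sol: "is_solution aL aR aP K tauRL tauLR H X P"
      and close: "\<forall>s\<in>{-max tauRL tauLR..0}. norm ((H s, X s, P s) - (Hs, Xs, Ps)) < \<delta>"
      and "0 \<le> t" for H X P t
  proof -
    interpret coupled_delay_solution aL aR aP K tauRL tauLR C muL muR muP Hs Xs Ps H X P
      using sol by unfold_locales
    have "dev s < \<delta>\<^sup>2" if "s \<in> {-max tauRL tauLR..0}" for s
      using close that unfolding dev_eq_norm_power2 by (auto intro: power_strict_mono)
    then have "dev t < \<epsilon>\<^sup>2"
      using dev_bound_of_history \<open>0 \<le> t\<close> M\<delta> unfolding M_def by metis
    then show ?thesis
      using \<open>0 < \<epsilon>\<close> unfolding dev_eq_norm_power2 by (auto intro: power_less_imp_less_base)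
  qed
  with \<open>0 < \<delta>\<close> show ?thesis by blast
qed

lemma bounded_solution_tendsto_equilibrium:
  assumes "LL-lipschitz_on UNIV aL" "LR-lipschitz_on UNIV aR" "LP-lipschitz_on UNIV aP"
    and "is_solution aL aR aP K tauRL tauLR H X P"
    and "bounded ((\<lambda>t. (H t, X t, P t)) ` {-max tauRL tauLR..})"
  shows "((\<lambda>t. (H t, X t, P t)) \<longlongrightarrow> (Hs, Xs, Ps)) at_top"
proof -
  interpret coupled_delay_solution aL aR aP K tauRL tauLR C muL muR muP Hs Xs Ps H X P
    using assms(4) by unfold_locales
  obtain B where "\<And>t. -max tauRL tauLR \<le> t \<Longrightarrow> norm (H t, X t, P t) \<le> B"
    using assms(5) by (auto simp: bounded_iff)
  then obtain L where "L-lipschitz_on {0..} (\<lambda>t. (H t, X t, P t))"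
    using lipschitz_on_bounded_solution[OF assms(1-3)] by blast
  then show ?thesis by (rule tendsto_equilibrium_if_lipschitz)
qed

end

theorem theorem3p6:
  fixes aL :: "real^'dL^'T \<Rightarrow> real^'dL^'T"
    and aR :: "real^'dR^'V \<Rightarrow> real^'dR^'V"
    and aP :: "real^'nP \<Rightarrow> real^'nP"
    and k :: "'T::finite \<Rightarrow> 'V::finite \<Rightarrow> real^'dR^'dL"
    and tauRL tauLR CK muL muR muP rL rR rP :: real
    and cL Hs :: "real^'dL^'T" and cR Xs :: "real^'dR^'V" and cP Ps :: "real^'nP"
  defines "K \<equiv> kernel_op k"
    and "tau \<equiv> max tauRL tauLR"
    and "S \<equiv> cball cL rL \<times> cball cR rR \<times> cball cP rP"
    and "alphaL \<equiv> muL / 2 - CK\<^sup>2 / (2 * muR)"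
    and "alphaR \<equiv> muR / 2 - CK\<^sup>2 / (2 * muL)"
  assumes delays: "tauRL \<ge> 0" "tauLR \<ge> 0"
    and K_bound: "onorm K \<le> hs_norm k" "hs_norm k \<le> CK"
    and lipL: "\<exists>L. L-lipschitz_on UNIV aL"
    and lipR: "\<exists>L. L-lipschitz_on UNIV aR"
    and lipP: "\<exists>L. L-lipschitz_on UNIV aP"
    and mu_pos: "muL > 0" "muR > 0" "muP > 0"
    and dissL: "one_sided_dissipative aL muL"
    and dissR: "one_sided_dissipative aR muR"
    and dissP: "one_sided_dissipative aP muP"
    and invariant: "\<And>H X P. is_solution aL aR aP K tauRL tauLR H X P \<Longrightarrow> history_in tau S H X P
                       \<Longrightarrow> \<forall>t\<ge>0. (H t, X t, P t) \<in> S"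
    and equil: "is_equilibrium aL aR aP K Hs Xs Ps" "(Hs, Xs, Ps) \<in> S"
    and small_gain: "CK\<^sup>2 < muL * muR"
  shows
    \<comment> \<open>uniqueness of the equilibrium\<close>
    "(\<forall>H' X' P'. is_equilibrium aL aR aP K H' X' P' \<longrightarrow> (H', X', P') = (Hs, Xs, Ps))
     \<comment> \<open>Lyapunov stability\<close>
     \<and> (\<forall>\<epsilon>>0. \<exists>\<delta>>0. \<forall>H X P. is_solution aL aR aP K tauRL tauLR H X P \<and> history_in tau S H X P
            \<and> (\<forall>s\<in>{-tau..0}. norm ((H s, X s, P s) - (Hs, Xs, Ps)) < \<delta>)
            \<longrightarrow> (\<forall>t\<ge>0. norm ((H t, X t, P t) - (Hs, Xs, Ps)) < \<epsilon>))
     \<comment> \<open>global attractivity\<close>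
     \<and> (\<forall>H X P. is_solution aL aR aP K tauRL tauLR H X P \<and> history_in tau S H X P
            \<longrightarrow> ((\<lambda>t. (H t, X t, P t)) \<longlongrightarrow> (Hs, Xs, Ps)) at_top)
     \<comment> \<open>Lyapunov-Krasovskii estimate\<close>
     \<and> alphaL > 0 \<and> alphaR > 0
     \<and> (\<forall>H X P. is_solution aL aR aP K tauRL tauLR H X P \<and> history_in tau S H X P
            \<longrightarrow> (\<forall>t>0. \<exists>D.
                 ((\<lambda>r. LKV CK muL muR tauRL tauLR (\<lambda>s. H (r + s) - Hs) (\<lambda>s. X (r + s) - Xs)
                        (\<lambda>s. P (r + s) - Ps)) has_real_derivative D) (at t)
                 \<and> D \<le> - alphaL * (norm (H t - Hs))\<^sup>2 - alphaR * (norm (X t - Xs))\<^sup>2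
                        - muP * (norm (P t - Ps))\<^sup>2))"
proof -
  interpret sys: coupled_delay_system aL aR aP K tauRL tauLR CK muL muR muP Hs Xs Ps
    using linear_kernel_op K_bound delays mu_pos dissL dissR dissP equil(1) small_gain
    unfolding K_def by (intro coupled_delay_system.intro) auto
  have alpha: "sys.alphaL = alphaL" "sys.alphaR = alphaR"
    by (simp_all add: sys.alphaL_def sys.alphaR_def alphaL_def alphaR_def)
  obtain LL LR LP where lipschitz: "LL-lipschitz_on UNIV aL" "LR-lipschitz_on UNIV aR"
      "LP-lipschitz_on UNIV aP"
    using lipL lipR lipP by blast
  have bounded: "bounded ((\<lambda>t. (H t, X t, P t)) ` {-tau..})"
    if "is_solution aL aR aP K tauRL tauLR H X P" "history_in tau S H X P" for H X P
  proof -
    have "(\<lambda>t. (H t, X t, P t)) ` {-tau..} \<subseteq> S"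
      using invariant[OF that] that(2) by (force simp: history_in_def)
    moreover have "bounded S" unfolding S_def by (intro bounded_Times bounded_cball)
    ultimately show ?thesis using bounded_subset by blast
  qed
  show ?thesis
    unfolding tau_def alpha[symmetric]
  proof (intro conjI allI impI sys.alphaL_pos sys.alphaR_pos)
    show "\<exists>\<delta>>0. \<forall>H X P. is_solution aL aR aP K tauRL tauLR H X P
        \<and> history_in (max tauRL tauLR) S H X P
        \<and> (\<forall>s\<in>{-max tauRL tauLR..0}. norm ((H s, X s, P s) - (Hs, Xs, Ps)) < \<delta>)
        \<longrightarrow> (\<forall>t\<ge>0. norm ((H t, X t, P t) - (Hs, Xs, Ps)) < \<epsilon>)" if "0 < \<epsilon>" for \<epsilon>
      using sys.lyapunov_stable[OF that] by blast
  qed (use sys.equilibrium_unique sys.LKV_has_derivative_le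
         sys.bounded_solution_tendsto_equilibrium[OF lipschitz] bounded[unfolded tau_def] in auto)
qed

end
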